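(* Every one-input one-output tAND net is sub-sound.
   Context: Petri nets and markings. A Petri net is a triple $(P,T,F)$ with $P$ a finite set of places, $T$ a finite set of transitions, $P\cap T=\emptyset$, and $F\subseteq (P\times T)\cup(T\times P)$. For a node $x$, $\bullet x=\{y\mid (y,x)\in F\}$, $x\bullet=\{y\mid (x,y)\in F\}$. A marking is a multiset over $P$ (a function $P\to\mathbb N$); sets of places are identified with bags of multiplicity one, $+,-,\le$ are pointwise, and $k.m$ is the sum of $k$ copies of $m$. Transition $t$ is enabled at $m$ iff $\bullet t\le m$, firing gives $m-\bullet t+t\bullet$, and $m\xrightarrow{*}m'$ denotes reachability by a finite (possibly empty) firing sequence. Workflow nets. A pWF net is $(P,T,F,I,O)$ with $(P,T,F)$ a Petri net, $I,O\subseteq P$ non-empty, every node reachable by a directed path from some node of $I$, and some node of $O$ reachable from every node. A tWF net is the same with $I,O$ non-empty subsets of $T$. Input nodes may have incoming edges and output nodes outgoing edges. A WF net is one-input one-output if $|I|=|O|=1$. The place-completion $\mathrm{pc}(N)$ of a tWF net $N=(P,T,F,I,O)$ is obtained by adding two fresh places $p_i,p_o$ with edges $(p_i,t)$ for all $t\in I$ and $(t,p_o)$ for all $t\in O$, and taking input set $\{p_i\}$ and output set $\{p_o\}$. AND nets. An AND net is an acyclic WF net $(P,T,F,I,O)$ such that for every place $p$: (1) either $p\in I$ and $|\bullet p|=0$, or $p\notin I$ and $|\bullet p|=1$; and (2) either $p\in O$ and $|p\bullet|=0$, or $p\notin O$ and $|p\bullet|=1$. A tAND net is an AND net that is a tWF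 net. Sub-soundness. A pWF net is sub-sound if for all integers $k\ge k'\ge 0$ and every marking $m'$: if $k.I\xrightarrow{*}m'+k'.O$ then $m'\xrightarrow{*}(k-k').O$. A tWF net is sub-sound iff its place-completion is. *)

theory Defs
  imports Main "HOL-Library.Multiset"
begin

definition preset :: "('a \<times> 'a) set \<Rightarrow> 'a \<Rightarrow> 'a set" where
  "preset F x = {y. (y, x) \<in> F}"

definition postset :: "('a \<times> 'a) set \<Rightarrow> 'a \<Rightarrow> 'a set" where
  "postset F x = {y. (x, y) \<in> F}"

definition petri_net :: "'a set \<Rightarrow> 'a set \<Rightarrow> ('a \<times> 'a) set \<Rightarrow> bool" where
  "petri_net P T F \<longleftrightarrow> finite P \<and> finite T \<and> P \<inter> T = {} \<and> F \<subseteq> (P \<times> T) \<union> (T \<times> P)"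

definition fire :: "'a set \<Rightarrow> ('a \<times> 'a) set \<Rightarrow> 'a multiset \<Rightarrow> 'a multiset \<Rightarrow> bool" where
  "fire T F m m' \<longleftrightarrow> (\<exists>t\<in>T. mset_set (preset F t) \<subseteq># m \<and>
       m' = m - mset_set (preset F t) + mset_set (postset F t))"

definition reach :: "'a set \<Rightarrow> ('a \<times> 'a) set \<Rightarrow> 'a multiset \<Rightarrow> 'a multiset \<Rightarrow> bool" where
  "reach T F = (fire T F)\<^sup>*\<^sup>*"

definition wf_net :: "'a set \<Rightarrow> 'a set \<Rightarrow> ('a \<times> 'a) set \<Rightarrow> 'a set \<Rightarrow> 'a set \<Rightarrow> bool" where
  "wf_net P T F I Out \<longleftrightarrow> petri_net P T F \<and> I \<noteq> {} \<and> Out \<noteq> {} \<and>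
     (\<forall>x \<in> P \<union> T. \<exists>i\<in>I. (i, x) \<in> F\<^sup>*) \<and>
     (\<forall>x \<in> P \<union> T. \<exists>q\<in>Out. (x, q) \<in> F\<^sup>*)"

definition pwf_net :: "'a set \<Rightarrow> 'a set \<Rightarrow> ('a \<times> 'a) set \<Rightarrow> 'a set \<Rightarrow> 'a set \<Rightarrow> bool" where
  "pwf_net P T F I Out \<longleftrightarrow> wf_net P T F I Out \<and> I \<subseteq> P \<and> Out \<subseteq> P"

definition twf_net :: "'a set \<Rightarrow> 'a set \<Rightarrow> ('a \<times> 'a) set \<Rightarrow> 'a set \<Rightarrow> 'a set \<Rightarrow> bool" where
  "twf_net P T F I Out \<longleftrightarrow> wf_net P T F I Out \<and> I \<subseteq> T \<and> Out \<subseteq> T"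

definition and_net :: "'a set \<Rightarrow> 'a set \<Rightarrow> ('a \<times> 'a) set \<Rightarrow> 'a set \<Rightarrow> 'a set \<Rightarrow> bool" where
  "and_net P T F I Out \<longleftrightarrow> (pwf_net P T F I Out \<or> twf_net P T F I Out) \<and> acyclic F \<and>
     (\<forall>p\<in>P. (p \<in> I \<and> card (preset F p) = 0) \<or> (p \<notin> I \<and> card (preset F p) = 1)) \<and>
     (\<forall>p\<in>P. (p \<in> Out \<and> card (postset F p) = 0) \<or> (p \<notin> Out \<and> card (postset F p) = 1))"

definition tand_net :: "'a set \<Rightarrow> 'a set \<Rightarrow> ('a \<times> 'a) set \<Rightarrow> 'a set \<Rightarrow> 'a set \<Rightarrow> bool" where
  "tand_net P T F I Out \<longleftrightarrow> and_net P T F I Out \<and> twf_net P T F I Out"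

definition sub_sound_p :: "'a set \<Rightarrow> 'a set \<Rightarrow> ('a \<times> 'a) set \<Rightarrow> 'a set \<Rightarrow> 'a set \<Rightarrow> bool" where
  "sub_sound_p P T F I Out \<longleftrightarrow>
     (\<forall>k k' :: nat. \<forall>m'. k' \<le> k \<longrightarrow>
        reach T F (repeat_mset k (mset_set I)) (m' + repeat_mset k' (mset_set Out)) \<longrightarrow>
        reach T F m' (repeat_mset (k - k') (mset_set Out)))"

text \<open>Node type of the place-completion: old nodes plus two fresh places.\<close>
datatype 'a cnode = Old 'a | PIn | POut

definition pc_P :: "'a set \<Rightarrow> 'a cnode set" where
  "pc_P P = Old ` P \<union> {PIn, POut}"

definition pc_T :: "'a set \<Rightarrow> 'a cnode set" where
  "pc_T T = Old ` T"

definition pc_F :: "('a \<times> 'a) set \<Rightarrow> 'a set \<Rightarrow> 'a set \<Rightarrow> ('a cnode \<times> 'a cnode) set" where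
  "pc_F F I Out = map_prod Old Old ` F \<union> {(PIn, Old t) | t. t \<in> I} \<union> {(Old t, POut) | t. t \<in> Out}"

definition sub_sound_t :: "'a set \<Rightarrow> 'a set \<Rightarrow> ('a \<times> 'a) set \<Rightarrow> 'a set \<Rightarrow> 'a set \<Rightarrow> bool" where
  "sub_sound_t P T F I Out \<longleftrightarrow> sub_sound_p (pc_P P) (pc_T T) (pc_F F I Out) {PIn} {POut}"

end

theory Submission
  imports Defs
begin

(* Let N be a one-input one-output tAND net with input transition ii and
   output transition oo.  Every place p has exactly one producer prd p and one consumer
   csm p.  In the place-completion, run from k tokens on PIn and record how often each
   transition t has fired (n t).  Token conservation shows that the marking is determined
   by n: PIn holds k - n ii, POut holds n oo, and every old place p holds
   n (prd p) - n (csm p); moreover reachability from ii forces n t <= k for all t.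
   Conversely, as long as some transition has fired fewer than k times, one that is
   F-minimal among these is enabled (acyclicity), so every reachable marking can be run to
   the state where every transition fired exactly k times, i.e. to k.POut.  Subtracting
   k' output tokens throughout gives sub-soundness. *)

lemma preset_pc_Old:
  "preset (pc_F F I Out) (Old t) = Old ` preset F t \<union> (if t \<in> I then {PIn} else {})"
  unfolding preset_def pc_F_def by auto

lemma postset_pc_Old:
  "postset (pc_F F I Out) (Old t) = Old ` postset F t \<union> (if t \<in> Out then {POut} else {})"
  unfolding postset_def pc_F_def by auto

lemma Old_in_preset_pc: "Old p \<in> preset (pc_F F I Out) (Old t) \<longleftrightarrow> (p, t) \<in> F"
  unfolding preset_def pc_F_def by auto

lemma Old_in_postset_pc: "Old p \<in> postset (pc_F F I Out) (Old t) \<longleftrightarrow> (t, p) \<in> F"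
  unfolding postset_def pc_F_def by auto

lemma PIn_in_preset_pc: "PIn \<in> preset (pc_F F I Out) (Old t) \<longleftrightarrow> t \<in> I"
  unfolding preset_def pc_F_def by auto

lemma PIn_notin_postset_pc: "PIn \<notin> postset (pc_F F I Out) (Old t)"
  unfolding postset_def pc_F_def by auto

lemma POut_notin_preset_pc: "POut \<notin> preset (pc_F F I Out) (Old t)"
  unfolding preset_def pc_F_def by auto

lemma POut_in_postset_pc: "POut \<in> postset (pc_F F I Out) (Old t) \<longleftrightarrow> t \<in> Out"
  unfolding postset_def pc_F_def by auto

lemma card_preset_1_unique:
  assumes "card (preset F p) = 1" shows "\<exists>!u. (u, p) \<in> F"
proof -
  obtain u where "preset F p = {u}" using assms by (rule card_1_singletonE)
  then have "(x, p) \<in> F \<longleftrightarrow> x = u" for x unfolding preset_def by blast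
  then show ?thesis by auto
qed

lemma card_postset_1_unique:
  assumes "card (postset F p) = 1" shows "\<exists>!v. (p, v) \<in> F"
proof -
  obtain v where "postset F p = {v}" using assms by (rule card_1_singletonE)
  then have "(p, x) \<in> F \<longleftrightarrow> x = v" for x unfolding postset_def by blast
  then show ?thesis by auto
qed

locale one_io_tand_net =
  fixes P T :: "'a set" and F :: "('a \<times> 'a) set" and ii oo :: 'a
  assumes finite_P: "finite P" and finite_T: "finite T" and disjoint: "P \<inter> T = {}"
    and flow: "F \<subseteq> P \<times> T \<union> T \<times> P"
    and ii_T: "ii \<in> T" and oo_T: "oo \<in> T"
    and reach_from_ii: "\<forall>t\<in>T. (ii, t) \<in> F\<^sup>*"
    and acyclic_F: "acyclic F"
    and unique_producer: "\<forall>p\<in>P. \<exists>!u. (u, p) \<in> F"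
    and unique_consumer: "\<forall>p\<in>P. \<exists>!v. (p, v) \<in> F"
begin

abbreviation Tc :: "'a cnode set" where "Tc \<equiv> pc_T T"
abbreviation Fc :: "('a cnode \<times> 'a cnode) set" where "Fc \<equiv> pc_F F {ii} {oo}"

abbreviation pre :: "'a \<Rightarrow> 'a cnode multiset" where "pre t \<equiv> mset_set (preset Fc (Old t))"
abbreviation post :: "'a \<Rightarrow> 'a cnode multiset" where "post t \<equiv> mset_set (postset Fc (Old t))"

definition prd :: "'a \<Rightarrow> 'a" where "prd p = (THE u. (u, p) \<in> F)"
definition csm :: "'a \<Rightarrow> 'a" where "csm p = (THE v. (p, v) \<in> F)"

lemma prd_flow: "p \<in> P \<Longrightarrow> (prd p, p) \<in> F"
  unfolding prd_def by (metis unique_producer theI')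

lemma csm_flow: "p \<in> P \<Longrightarrow> (p, csm p) \<in> F"
  unfolding csm_def by (metis unique_consumer theI')

lemma flow_into_place: "(u, p) \<in> F \<Longrightarrow> p \<in> P \<Longrightarrow> u = prd p"
  using prd_flow unique_producer by blast

lemma flow_out_of_place: "(p, v) \<in> F \<Longrightarrow> p \<in> P \<Longrightarrow> v = csm p"
  using csm_flow unique_consumer by blast

lemma prd_T: "p \<in> P \<Longrightarrow> prd p \<in> T"
  using prd_flow flow disjoint by blast

lemma csm_T: "p \<in> P \<Longrightarrow> csm p \<in> T"
  using csm_flow flow disjoint by blast

lemma prd_neq_csm:
  assumes "p \<in> P" shows "prd p \<noteq> csm p"
proof
  assume same: "prd p = csm p"
  have "(prd p, p) \<in> F" "(p, prd p) \<in> F" using prd_flow[OF assms] csm_flow[OF assms] same by simp_all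
  then have "(prd p, prd p) \<in> F\<^sup>+" by (meson trancl.r_into_trancl trancl_into_trancl)
  then show False using acyclic_F unfolding acyclic_def by blast
qed

lemma flow_into_transition: "t \<in> T \<Longrightarrow> (p, t) \<in> F \<longleftrightarrow> p \<in> P \<and> csm p = t"
  using flow disjoint csm_flow flow_out_of_place by blast

lemma flow_out_of_transition: "t \<in> T \<Longrightarrow> (t, p) \<in> F \<longleftrightarrow> p \<in> P \<and> prd p = t"
  using flow disjoint prd_flow flow_into_place by blast

lemma count_pre:
  assumes "t \<in> T"
  shows "count (pre t) x =
    (case x of Old p \<Rightarrow> of_bool (p \<in> P \<and> csm p = t) | PIn \<Rightarrow> of_bool (t = ii) | POut \<Rightarrow> 0)"
proof -
  have "preset F t \<subseteq> P" unfolding preset_def using flow_into_transition[OF assms] by blast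
  then have "finite (preset Fc (Old t))"
    unfolding preset_pc_Old using finite_P by (simp add: finite_subset)
  then have "count (pre t) x = of_bool (x \<in> preset Fc (Old t))" by simp
  then show ?thesis
    by (cases x) (simp_all add: Old_in_preset_pc flow_into_transition[OF assms]
        PIn_in_preset_pc POut_notin_preset_pc)
qed

lemma count_post:
  assumes "t \<in> T"
  shows "count (post t) x =
    (case x of Old p \<Rightarrow> of_bool (p \<in> P \<and> prd p = t) | PIn \<Rightarrow> 0 | POut \<Rightarrow> of_bool (t = oo))"
proof -
  have "postset F t \<subseteq> P" unfolding postset_def using flow_out_of_transition[OF assms] by blast
  then have "finite (postset Fc (Old t))"
    unfolding postset_pc_Old using finite_P by (simp add: finite_subset)
  then have "count (post t) x = of_bool (x \<in> postset Fc (Old t))" by simp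
  then show ?thesis
    by (cases x) (simp_all add: Old_in_postset_pc flow_out_of_transition[OF assms]
        PIn_notin_postset_pc POut_in_postset_pc)
qed

lemma enabled_iff:
  assumes "t \<in> T"
  shows "pre t \<subseteq># m \<longleftrightarrow>
    (t = ii \<longrightarrow> 0 < count m PIn) \<and> (\<forall>p\<in>P. csm p = t \<longrightarrow> 0 < count m (Old p))"
proof -
  have all_nodes: "(\<forall>x. Q x) \<longleftrightarrow> Q PIn \<and> Q POut \<and> (\<forall>p. Q (Old p))" for Q :: "'a cnode \<Rightarrow> bool"
    by (metis cnode.exhaust)
  show ?thesis
    unfolding subseteq_mset_def all_nodes[of "\<lambda>x. count (pre t) x \<le> count m x"]
    by (auto simp: count_pre[OF assms])
qed

lemma fire_pc_iff: "fire Tc Fc m m' \<longleftrightarrow> (\<exists>t\<in>T. pre t \<subseteq># m \<and> m' = m - pre t + post t)"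
  unfolding fire_def pc_T_def by blast

text \<open>The central invariant: m is the marking obtained from k tokens on PIn by firing each
  transition t exactly n t \<le> k times and then removing c tokens from POut.\<close>

definition consistent :: "nat \<Rightarrow> nat \<Rightarrow> 'a cnode multiset \<Rightarrow> ('a \<Rightarrow> nat) \<Rightarrow> bool" where
  "consistent k c m n \<longleftrightarrow> (\<forall>t\<in>T. n t \<le> k) \<and> count m PIn + n ii = k \<and> count m POut + c = n oo \<and>
     (\<forall>p\<in>P. count m (Old p) + n (csm p) = n (prd p)) \<and> set_mset m \<subseteq> pc_P P"

lemma consistent_initial: "consistent k 0 (repeat_mset k {#PIn#}) (\<lambda>_. 0)"
  unfolding consistent_def pc_P_def by auto

lemma consistent_remove_outputs:
  "consistent k c (m + repeat_mset j {#POut#}) n \<Longrightarrow> consistent k (c + j) m n"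
  unfolding consistent_def by auto

text \<open>An enabled transition has fired fewer than k times: either it is ii and PIn is still
  marked, or one of its input places is marked, so its producer fired more often than it.
  This is where reachability from ii is used.\<close>
lemma enabled_below_bound:
  assumes cons: "consistent k c m n" and t: "t \<in> T" and en: "pre t \<subseteq># m"
  shows "n t < k"
proof (cases "t = ii")
  case True
  then show ?thesis using cons en unfolding consistent_def enabled_iff[OF t] by auto
next
  case False
  obtain u where "(u, t) \<in> F" using reach_from_ii t False by (metis rtranclE)
  then have u: "u \<in> P" "csm u = t" using flow_into_transition[OF t] by auto
  have "0 < count m (Old u)" using en u unfolding enabled_iff[OF t] by auto
  moreover have "count m (Old u) + n t = n (prd u)" "n (prd u) \<le> k"
    using cons u prd_T unfolding consistent_def by auto
  ultimately show ?thesis by linarith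
qed

lemma consistent_fire:
  assumes cons: "consistent k c m n" and t: "t \<in> T" and en: "pre t \<subseteq># m"
  shows "consistent k c (m - pre t + post t) (n(t := Suc (n t)))"
proof -
  let ?m' = "m - pre t + post t" and ?n' = "n(t := Suc (n t))"
  have bound: "n t < k" using enabled_below_bound[OF assms] .
  have count': "count ?m' x = count m x - count (pre t) x + count (post t) x" for x by simp
  have enabled: "count (pre t) x \<le> count m x" for x using en by (simp add: subseteq_mset_def)
  have "\<forall>s\<in>T. ?n' s \<le> k" using cons bound unfolding consistent_def by auto
  moreover have "count ?m' PIn + ?n' ii = k"
    using count'[of PIn] enabled[of PIn] cons
    unfolding consistent_def count_pre[OF t] count_post[OF t] by auto
  moreover have "count ?m' POut + c = ?n' oo"
    using count'[of POut] cons unfolding consistent_def count_pre[OF t] count_post[OF t] by auto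
  moreover have "count ?m' (Old p) + ?n' (csm p) = ?n' (prd p)" if p: "p \<in> P" for p
    using count'[of "Old p"] enabled[of "Old p"] cons p prd_neq_csm[OF p]
    unfolding consistent_def count_pre[OF t] count_post[OF t] by auto
  moreover have "set_mset ?m' \<subseteq> pc_P P"
  proof
    fix x assume "x \<in># ?m'"
    then have "x \<in># m \<or> 0 < count (post t) x" by (meson in_diffD union_iff not_gr0 not_in_iff)
    then show "x \<in> pc_P P"
      using cons unfolding consistent_def pc_P_def count_post[OF t] by (cases x) auto
  qed
  ultimately show ?thesis unfolding consistent_def by blast
qed

lemma reach_consistent:
  assumes "reach Tc Fc m0 m" and "consistent k c m0 n0"
  shows "\<exists>n. consistent k c m n"
  using assms unfolding reach_def
proof (induction rule: rtranclp_induct)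
  case base
  then show ?case by blast
next
  case (step m1 m2)
  obtain n where "consistent k c m1 n" using step.IH step.prems by blast
  moreover obtain t where "t \<in> T" "pre t \<subseteq># m1" "m2 = m1 - pre t + post t"
    using step.hyps(2) unfolding fire_pc_iff by blast
  ultimately show ?case using consistent_fire by blast
qed

text \<open>Progress: if some transition has fired fewer than k times, then an F-minimal such
  transition is enabled, since the producers of its input places have all fired k times.\<close>
lemma unfinished_enabled:
  assumes cons: "consistent k c m n" and t0: "t0 \<in> T" "n t0 < k"
  shows "\<exists>t\<in>T. n t < k \<and> pre t \<subseteq># m"
proof -
  have "finite F" using flow finite_P finite_T by (meson finite_SigmaI finite_UnI rev_finite_subset)
  then have "wf (F\<^sup>+)" using acyclic_F finite_acyclic_wf wf_trancl by blast
  then obtain t where t: "t \<in> T" "n t < k"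
    and minimal: "\<And>s. (s, t) \<in> F\<^sup>+ \<Longrightarrow> s \<notin> {s\<in>T. n s < k}"
    using wfE_min[of "F\<^sup>+" t0 "{s\<in>T. n s < k}"] t0 by blast
  have "0 < count m PIn" if "t = ii" using cons t that unfolding consistent_def by auto
  moreover have "0 < count m (Old p)" if p: "p \<in> P" "csm p = t" for p
  proof -
    have "(prd p, t) \<in> F\<^sup>+"
      using prd_flow[OF p(1)] csm_flow[OF p(1)] p(2) by (meson trancl.r_into_trancl trancl_into_trancl)
    then have "k \<le> n (prd p)" using minimal prd_T[OF p(1)] by fastforce
    moreover have "count m (Old p) + n t = n (prd p)" using cons p unfolding consistent_def by auto
    ultimately show ?thesis using t(2) by linarith
  qed
  ultimately have "pre t \<subseteq># m" unfolding enabled_iff[OF t(1)] by blast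
  then show ?thesis using t by blast
qed

lemma consistent_finished:
  assumes cons: "consistent k c m n" and finished: "\<forall>t\<in>T. n t = k"
  shows "m = repeat_mset (k - c) {#POut#}"
proof (rule multiset_eqI)
  fix x
  show "count m x = count (repeat_mset (k - c) {#POut#}) x"
  proof (cases x)
    case (Old p)
    show ?thesis
    proof (cases "p \<in> P")
      case True
      then show ?thesis using Old cons finished prd_T csm_T unfolding consistent_def by auto
    next
      case False
      then have "x \<notin># m" using Old cons unfolding consistent_def pc_P_def by auto
      then show ?thesis using Old by (simp add: not_in_iff)
    qed
  next
    case PIn
    then show ?thesis using cons finished ii_T unfolding consistent_def by auto
  next
    case POut
    then show ?thesis using cons finished oo_T unfolding consistent_def by auto
  qed
qed

lemma run_to_completion:
  assumes "consistent k c m n"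
  shows "reach Tc Fc m (repeat_mset (k - c) {#POut#})"
  using assms
proof (induction "\<Sum>t\<in>T. k - n t" arbitrary: m n rule: less_induct)
  case less
  show ?case
  proof (cases "\<exists>t\<in>T. n t < k")
    case False
    then have "\<forall>t\<in>T. n t = k" using less.prems unfolding consistent_def by force
    then show ?thesis using consistent_finished[OF less.prems] unfolding reach_def by simp
  next
    case True
    then obtain t where t: "t \<in> T" "n t < k" and en: "pre t \<subseteq># m"
      using unfinished_enabled[OF less.prems] by blast
    have step: "fire Tc Fc m (m - pre t + post t)" unfolding fire_pc_iff using t en by blast
    have "(\<Sum>s\<in>T. k - (n(t := Suc (n t))) s) < (\<Sum>s\<in>T. k - n s)"
      by (rule sum_strict_mono_ex1) (use finite_T t in auto)
    then have "reach Tc Fc (m - pre t + post t) (repeat_mset (k - c) {#POut#})"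
      using less.hyps consistent_fire[OF less.prems t(1) en] by blast
    then show ?thesis using step unfolding reach_def by (meson converse_rtranclp_into_rtranclp)
  qed
qed

theorem completion_sub_sound:
  assumes "reach Tc Fc (repeat_mset k {#PIn#}) (m' + repeat_mset k' {#POut#})"
  shows "reach Tc Fc m' (repeat_mset (k - k') {#POut#})"
proof -
  obtain n where "consistent k 0 (m' + repeat_mset k' {#POut#}) n"
    using reach_consistent[OF assms consistent_initial] by blast
  then have "consistent k k' m' n" using consistent_remove_outputs by fastforce
  then show ?thesis by (rule run_to_completion)
qed

end

text \<open>A tAND net with input {ii} and output {oo} satisfies the locale assumptions:
  since ii and oo are transitions, no place is an input or output node, so every place has
  exactly one producer and one consumer.\<close>
lemma tand_net_one_io:
  assumes "tand_net P T F {ii} {oo}"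
  shows "one_io_tand_net P T F ii oo"
proof -
  have and_net: "and_net P T F {ii} {oo}" and twf: "twf_net P T F {ii} {oo}"
    using assms unfolding tand_net_def by auto
  have net: "petri_net P T F" "ii \<in> T" "oo \<in> T" "\<forall>t\<in>T. (ii, t) \<in> F\<^sup>*"
    using twf unfolding twf_net_def wf_net_def by auto
  have net_facts: "finite P" "finite T" "P \<inter> T = {}" "F \<subseteq> P \<times> T \<union> T \<times> P"
    using net(1) unfolding petri_net_def by auto
  have "p \<notin> {ii}" "p \<notin> {oo}" if "p \<in> P" for p using that net(2,3) net_facts(3) by auto
  then have cards: "\<forall>p\<in>P. card (preset F p) = 1" "\<forall>p\<in>P. card (postset F p) = 1"
    and "acyclic F"
    using and_net unfolding and_net_def by simp_all
  moreover have "\<forall>p\<in>P. \<exists>!u. (u, p) \<in> F"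
    using cards(1) by (intro ballI card_preset_1_unique) simp
  moreover have "\<forall>p\<in>P. \<exists>!v. (p, v) \<in> F"
    using cards(2) by (intro ballI card_postset_1_unique) simp
  ultimately show ?thesis
    using net(2-) net_facts unfolding one_io_tand_net_def by (intro conjI) assumption+
qed

theorem mainTheorem19:
  fixes P T :: "'a set" and F :: "('a \<times> 'a) set" and I Out :: "'a set"
  assumes "tand_net P T F I Out"
    and "card I = 1" and "card Out = 1"
  shows "sub_sound_t P T F I Out"
proof -
  obtain ii oo where I: "I = {ii}" and Out: "Out = {oo}"
    using assms(2,3) by (meson card_1_singletonE)
  have "tand_net P T F {ii} {oo}" using assms(1) unfolding I Out .
  then interpret one_io_tand_net P T F ii oo by (rule tand_net_one_io)
  show ?thesis
    unfolding sub_sound_t_def sub_sound_p_def I Out using completion_sub_sound by simp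
qed

end
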